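(* If $L$ is a $k$-flat of $I(\mathfrak{gl}_n,V\oplus\bigwedge^2)$, then $\{(a,b)\in\mathbb{E}^\ast_n:\vec v(a,b)\in L\}$ is a $k$-ensemble.
   Context: Identify the diagonal Cartan subalgebra of $\mathfrak{gl}_n$ with $\mathbb{R}^n$ with coordinates $x_1,\dots,x_n$, and let $W=\{x_1\ge\cdots\ge x_n\}$. For $1\le i\le j\le n$ let $\lambda_{i,j}^\perp$ be the hyperplane $x_i+x_j=0$ (for $i=j$: $x_i=0$); $I(\mathfrak{gl}_n,V\oplus\bigwedge^2)$ is the arrangement of these hyperplanes restricted to $W$. A flat is a set $W\cap\bigcap_{(i,j)\in T}\lambda_{i,j}^\perp$ for a (possibly empty) set $T$ of pairs $i\le j$; a $k$-flat is one whose linear span has dimension $k$. Let $\vec v(a,b)\in\mathbb{R}^n$ have $a$ ones, then $n-a-b$ zeros, then $b$ minus-ones. Order $\mathbb{N}^2$ by $(a,b)\le(c,d)\iff a\le c, b\le d$, with level $\ell(a,b)=a+b$. Let $\mathbb{E}_n=\{P\in\mathbb{N}^2:\ell(P)\le n\}$, $\mathbb{E}^\ast_n=\mathbb{E}_n\setminus\{(0,0)\}$, $\widehat{\mathbb{E}}_n=\mathbb{E}_n\sqcup\{\infty\}$ with $\infty$ the maximum; intervals $[A,B]$ are taken in $\widehat{\mathbb{E}}_n$. An ensemble is a set $\left(\bigcup_{0\le i\le m}[A_i,B_i]\right)\cap\mathbb{E}^\ast_n$ with $A_i,B_i\in\widehat{\mathbb{E}}_n$ such that (1) $A_0=(0,0)$;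 (2) $A_i\le B_i$; (3) $B_i+(1,1)\le A_{i+1}$ for $0\le i\le m-1$; (4) $\ell(B_m)<n$ or $B_m=\infty$. It is a $k$-ensemble if its elements have exactly $k$ distinct levels. *)

theory Defs
  imports "HOL-Analysis.Analysis" "HOL-Library.Function_Algebras"
begin

text \<open>Vectors of R^n are modelled as functions nat \<Rightarrow> real with coordinates x 1, ..., x n
  and all other coordinates equal to 0.\<close>

definition scalevec :: "real \<Rightarrow> (nat \<Rightarrow> real) \<Rightarrow> (nat \<Rightarrow> real)" where
  "scalevec c x = (\<lambda>i. c * x i)"

definition span_dim :: "(nat \<Rightarrow> real) set \<Rightarrow> nat" where
  "span_dim L = vector_space.dim scalevec (module.span scalevec L)"

definition chamber :: "nat \<Rightarrow> (nat \<Rightarrow> real) set" where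
  "chamber n = {x. (\<forall>i. (i < 1 \<or> n < i) \<longrightarrow> x i = 0) \<and>
                   (\<forall>i j. 1 \<le> i \<longrightarrow> i \<le> j \<longrightarrow> j \<le> n \<longrightarrow> x j \<le> x i)}"

definition hyp :: "nat \<Rightarrow> nat \<Rightarrow> (nat \<Rightarrow> real) set" where
  "hyp i j = (if i = j then {x. x i = 0} else {x. x i + x j = 0})"

definition is_flat :: "nat \<Rightarrow> (nat \<Rightarrow> real) set \<Rightarrow> bool" where
  "is_flat n L \<longleftrightarrow> (\<exists>T. T \<subseteq> {(i, j). 1 \<le> i \<and> i \<le> j \<and> j \<le> n} \<and>
        L = chamber n \<inter> (\<Inter>(i, j)\<in>T. hyp i j))"

definition is_k_flat :: "nat \<Rightarrow> nat \<Rightarrow> (nat \<Rightarrow> real) set \<Rightarrow> bool" where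
  "is_k_flat n k L \<longleftrightarrow> is_flat n L \<and> span_dim L = k"

text \<open>v(a,b): a ones, then n-a-b zeros, then b minus-ones.\<close>
definition vv :: "nat \<Rightarrow> nat \<Rightarrow> nat \<Rightarrow> (nat \<Rightarrow> real)" where
  "vv n a b = (\<lambda>i. if 1 \<le> i \<and> i \<le> a then 1
                   else if n - b < i \<and> i \<le> n \<and> a < i then -1 else 0)"

definition lev :: "nat \<times> nat \<Rightarrow> nat" where
  "lev P = fst P + snd P"

definition pleq :: "nat \<times> nat \<Rightarrow> nat \<times> nat \<Rightarrow> bool" where
  "pleq P Q \<longleftrightarrow> fst P \<le> fst Q \<and> snd P \<le> snd Q"

definition E :: "nat \<Rightarrow> (nat \<times> nat) set" where
  "E n = {P. lev P \<le> n}"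

definition Estar :: "nat \<Rightarrow> (nat \<times> nat) set" where
  "Estar n = E n - {(0, 0)}"

text \<open>Elements of \<widehat>E_n: Fin P for P \<in> E_n, and Infty (the maximum).\<close>
datatype ept = Fin "nat \<times> nat" | Infty

fun eleq :: "ept \<Rightarrow> ept \<Rightarrow> bool" where
  "eleq (Fin P) (Fin Q) = pleq P Q"
| "eleq _ Infty = True"
| "eleq Infty (Fin _) = False"

definition Ehat :: "nat \<Rightarrow> ept set" where
  "Ehat n = Fin ` E n \<union> {Infty}"

fun eshift :: "ept \<Rightarrow> ept" where
  "eshift (Fin (a, b)) = Fin (a + 1, b + 1)"
| "eshift Infty = Infty"

definition interval :: "nat \<Rightarrow> ept \<Rightarrow> ept \<Rightarrow> ept set" where
  "interval n A B = {P \<in> Ehat n. eleq A P \<and> eleq P B}"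

definition is_ensemble :: "nat \<Rightarrow> (nat \<times> nat) set \<Rightarrow> bool" where
  "is_ensemble n S \<longleftrightarrow> (\<exists>m A B.
      (\<forall>i\<le>m. A i \<in> Ehat n \<and> B i \<in> Ehat n) \<and>
      A 0 = Fin (0, 0) \<and>
      (\<forall>i\<le>m. eleq (A i) (B i)) \<and>
      (\<forall>i<m. eleq (eshift (B i)) (A (Suc i))) \<and>
      ((\<exists>P. B m = Fin P \<and> lev P < n) \<or> B m = Infty) \<and>
      S = {P \<in> Estar n. Fin P \<in> (\<Union>i\<le>m. interval n (A i) (B i))})"

definition is_k_ensemble :: "nat \<Rightarrow> nat \<Rightarrow> (nat \<times> nat) set \<Rightarrow> bool" where
  "is_k_ensemble n k S \<longleftrightarrow> is_ensemble n S \<and> card (lev ` S) = k"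

end

theory Submission
  imports Defs
begin

text \<open>Intersecting with the hyperplane \<open>x\<^sub>i + x\<^sub>j = 0\<close> removes from the vertex set
  \<open>{P. v(P) \<in> L}\<close> exactly the points of a diagonal strip between \<open>c\<close> and \<open>c + (1,1)\<close>,
  where \<open>c = (i - 1, n - j)\<close>. Starting from \<open>\<EE>\<^sub>n\<close> and removing strips one at a time keeps
  the set a union of intervals, each starting at least \<open>(1,1)\<close> above the end of the previous
  one, i.e. an ensemble. For the dimension: subtracting from \<open>x \<in> L\<close> its least nonzero
  \<open>|x\<^sub>i|\<close> times its sign vector stays in \<open>L\<close> and kills a coordinate, and every sign vector in
  the chamber is some \<open>v(a,b)\<close>, so \<open>L\<close> spans the same space as its vertices. In each interval
  a hook (up the left edge, then along the top) meets every level, and every vertex of the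
  interval is \<open>v(X) + v(Y) - v(Z)\<close> for three hook vertices. The hooks of all intervals form
  one chain, whose vectors are independent since each has a nonzero coordinate on which
  all smaller ones vanish.\<close>

interpretation V: vector_space scalevec
  by unfold_locales (auto simp: scalevec_def algebra_simps fun_eq_iff)

definition vpt :: "nat \<Rightarrow> nat \<times> nat \<Rightarrow> (nat \<Rightarrow> real)" where
  "vpt n P = vv n (fst P) (snd P)"

definition vertices :: "nat \<Rightarrow> (nat \<Rightarrow> real) set \<Rightarrow> (nat \<times> nat) set" where
  "vertices n L = {P \<in> Estar n. vpt n P \<in> L}"

lemma vv_eq: "a + b \<le> n \<Longrightarrow> vv n a b i =
   (if 1 \<le> i \<and> i \<le> a then 1 else 0) - (if n - b < i \<and> i \<le> n then 1 else 0)"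
  by (auto simp: vv_def)

lemma vpt_zero [simp]: "vpt n (0, 0) = 0"
  by (auto simp: vpt_def vv_def fun_eq_iff)

lemma vv_in_chamber: "a + b \<le> n \<Longrightarrow> vv n a b \<in> chamber n"
  unfolding chamber_def by (auto simp: vv_eq)

lemma pleq_refl [simp]: "pleq P P"
  by (auto simp: pleq_def)

lemma pleq_trans: "pleq P Q \<Longrightarrow> pleq Q R \<Longrightarrow> pleq P R"
  by (auto simp: pleq_def)

lemma lev_mono: "pleq P Q \<Longrightarrow> lev P \<le> lev Q"
  by (auto simp: pleq_def lev_def)

lemma pleq_lev_eq: "pleq P Q \<Longrightarrow> lev P = lev Q \<Longrightarrow> P = Q"
  by (cases P; cases Q) (auto simp: pleq_def lev_def)

lemma eleq_refl [simp]: "eleq x x"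
  by (cases x) auto

lemma eleq_trans: "eleq x y \<Longrightarrow> eleq y z \<Longrightarrow> eleq x z"
  by (cases x; cases y; cases z) (auto simp: pleq_def)

lemma eshift_mono: "eleq x y \<Longrightarrow> eleq (eshift x) (eshift y)"
  by (cases x; cases y) (auto simp: pleq_def)

lemma E_finite: "finite (E n)"
proof (rule finite_subset)
  show "E n \<subseteq> {0..n} \<times> {0..n}" by (auto simp: E_def lev_def)
qed simp

definition pshift :: "nat \<times> nat \<Rightarrow> nat \<times> nat" where
  "pshift c = (fst c + 1, snd c + 1)"

definition pmax :: "nat \<times> nat \<Rightarrow> nat \<times> nat \<Rightarrow> nat \<times> nat" where
  "pmax P Q = (max (fst P) (fst Q), max (snd P) (snd Q))"

lemma pleq_pmax_iff: "pleq (pmax P Q) R \<longleftrightarrow> pleq P R \<and> pleq Q R"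
  by (auto simp: pleq_def pmax_def)

fun emin :: "ept \<Rightarrow> nat \<times> nat \<Rightarrow> ept" where
  "emin (Fin P) c = Fin (min (fst P) (fst c), min (snd P) (snd c))"
| "emin Infty c = Fin c"

lemma emin_le: "eleq (emin B c) B" "eleq (emin B c) (Fin c)"
  by (cases B; auto simp: pleq_def)+

lemma eleq_Fin_emin_iff: "eleq (Fin P) (emin B c) \<longleftrightarrow> eleq (Fin P) B \<and> pleq P c"
  by (cases B) (auto simp: pleq_def)

lemma emin_FinE:
  obtains b where "emin B c = Fin b" "pleq b c"
  by (cases B) (auto simp: pleq_def)

subsection \<open>Strips\<close>

definition outside_strip :: "nat \<times> nat \<Rightarrow> (nat \<times> nat) set" where
  "outside_strip c = {P. pleq P c \<or> pleq (pshift c) P}"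

lemma vv_in_hyp_iff:
  assumes "a + b \<le> n" "1 \<le> i" "i \<le> j" "j \<le> n"
  shows "vv n a b \<in> hyp i j \<longleftrightarrow> (a, b) \<in> outside_strip (i - 1, n - j)"
  using assms unfolding hyp_def outside_strip_def pleq_def pshift_def
  by (cases "i = j") (auto simp: vv_eq)

lemma flat_vertices_eq_outside_strips:
  assumes "T \<subseteq> {(i, j). 1 \<le> i \<and> i \<le> j \<and> j \<le> n}"
  shows "vertices n (chamber n \<inter> (\<Inter>(i, j)\<in>T. hyp i j))
       = Estar n \<inter> \<Inter> (outside_strip ` (\<lambda>(i, j). (i - 1, n - j)) ` T)"
proof -
  have "vpt n P \<in> hyp i j \<longleftrightarrow> P \<in> outside_strip (i - 1, n - j)" if "P \<in> Estar n" "(i, j) \<in> T" for P i j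
    using that assms vv_in_hyp_iff[of "fst P" "snd P" n i j]
    by (auto simp: vpt_def Estar_def E_def lev_def)
  moreover have "vpt n P \<in> chamber n" if "P \<in> Estar n" for P
    using that vv_in_chamber by (auto simp: vpt_def Estar_def E_def lev_def)
  ultimately show ?thesis unfolding vertices_def by fastforce
qed

subsection \<open>Ensembles as lists of intervals\<close>

text \<open>An interval \<open>[A, B]\<close> with finite lower end \<open>A\<close>; the lower ends of an ensemble are
  finite since \<open>A\<^sub>0 = (0,0)\<close> and \<open>A\<^sub>i\<^sub>+\<^sub>1 \<ge> B\<^sub>i + (1,1)\<close>.\<close>

type_synonym block = "(nat \<times> nat) \<times> ept"

definition block_pts :: "nat \<Rightarrow> block \<Rightarrow> (nat \<times> nat) set" where
  "block_pts n x = {P. lev P \<le> n \<and> pleq (fst x) P \<and> eleq (Fin P) (snd x)}"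

definition blocks_pts :: "nat \<Rightarrow> block list \<Rightarrow> (nat \<times> nat) set" where
  "blocks_pts n xs = (\<Union>x\<in>set xs. block_pts n x)"

definition block_before :: "block \<Rightarrow> block \<Rightarrow> bool" where
  "block_before x y \<longleftrightarrow> eleq (eshift (snd x)) (Fin (fst y))"

definition wf_block :: "nat \<Rightarrow> block \<Rightarrow> bool" where
  "wf_block n x \<longleftrightarrow> lev (fst x) \<le> n \<and> eleq (Fin (fst x)) (snd x) \<and>
      (snd x = Infty \<or> (\<exists>b. snd x = Fin b \<and> lev b < n))"

definition ensemble_list :: "nat \<Rightarrow> block list \<Rightarrow> bool" where
  "ensemble_list n xs \<longleftrightarrow> xs \<noteq> [] \<and> fst (hd xs) = (0, 0) \<and>
      (\<forall>x\<in>set xs. wf_block n x) \<and> sorted_wrt block_before xs"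

lemma ensemble_list_is_ensemble:
  assumes xs: "ensemble_list n xs"
  shows "is_ensemble n (blocks_pts n xs - {(0, 0)})"
proof -
  define m where "m = length xs - 1"
  define A where "A = (\<lambda>k. Fin (fst (xs ! k)))"
  define B where "B = (\<lambda>k. snd (xs ! k))"
  have len: "length xs = Suc m" using xs by (auto simp: ensemble_list_def m_def)
  have wf: "wf_block n (xs ! k)" if "k \<le> m" for k
    using xs len that by (auto simp: ensemble_list_def)
  have "set xs = (\<lambda>k. xs ! k) ` {..m}"
    using len by (auto simp: set_conv_nth less_Suc_eq_le)
  then have "blocks_pts n xs = (\<Union>k\<le>m. block_pts n (xs ! k))"
    by (simp add: blocks_pts_def)
  moreover have "Fin P \<in> interval n (A k) (B k) \<longleftrightarrow> P \<in> block_pts n (xs ! k)" for k P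
    by (auto simp: interval_def A_def B_def block_pts_def Ehat_def E_def)
  ultimately have pts: "blocks_pts n xs - {(0, 0)}
      = {P \<in> Estar n. Fin P \<in> (\<Union>k\<le>m. interval n (A k) (B k))}"
    by (auto simp: Estar_def E_def block_pts_def)
  have "\<forall>k<m. eleq (eshift (B k)) (A (Suc k))"
    using xs len by (auto simp: A_def B_def ensemble_list_def sorted_wrt_iff_nth_less block_before_def)
  moreover have "A 0 = Fin (0, 0)"
    using xs by (cases xs) (auto simp: A_def ensemble_list_def)
  moreover have "\<forall>k\<le>m. A k \<in> Ehat n \<and> B k \<in> Ehat n \<and> eleq (A k) (B k)"
  proof (intro allI impI)
    fix k assume "k \<le> m"
    then show "A k \<in> Ehat n \<and> B k \<in> Ehat n \<and> eleq (A k) (B k)"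
      using wf[of k] by (auto simp: A_def B_def wf_block_def Ehat_def E_def)
  qed
  moreover have "(\<exists>P. B m = Fin P \<and> lev P < n) \<or> B m = Infty"
    using wf[of m] by (auto simp: B_def wf_block_def)
  ultimately show ?thesis
    unfolding is_ensemble_def pts by blast
qed

lemma block_before_pleq:
  assumes "block_before x y" "P \<in> block_pts n x" "Q \<in> block_pts n y"
  shows "pleq P Q"
proof -
  have "eleq (eshift (Fin P)) (Fin (fst y))"
    using assms(1,2) eshift_mono eleq_trans by (fastforce simp: block_pts_def block_before_def)
  moreover have "pleq (fst y) Q" using assms(3) by (simp add: block_pts_def)
  ultimately show ?thesis by (cases P) (auto simp: pleq_def)
qed

fun split_block :: "nat \<Rightarrow> nat \<times> nat \<Rightarrow> block \<Rightarrow> block list" where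
  "split_block n c (a, B) =
     (if pleq a c then [(a, emin B c)] else []) @
     (if lev (pmax a (pshift c)) \<le> n \<and> eleq (Fin (pmax a (pshift c))) B
      then [(pmax a (pshift c), B)] else [])"

definition refine :: "nat \<Rightarrow> nat \<times> nat \<Rightarrow> block list \<Rightarrow> block list" where
  "refine n c xs = concat (map (split_block n c) xs)"

lemma wf_split_block:
  assumes "wf_block n x" "lev c < n" "y \<in> set (split_block n c x)"
  shows "wf_block n y"
proof -
  obtain a B where x: "x = (a, B)" by fastforce
  obtain b where b: "emin B c = Fin b" "pleq b c" by (rule emin_FinE)
  have "lev b < n" using lev_mono[OF b(2)] assms(2) by simp
  then have "pleq a c \<Longrightarrow> wf_block n (a, emin B c)"
    using assms(1) b eleq_Fin_emin_iff[of a B c] unfolding x wf_block_def by auto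
  moreover have "eleq (Fin (pmax a (pshift c))) B \<Longrightarrow> lev (pmax a (pshift c)) \<le> n \<Longrightarrow>
      wf_block n (pmax a (pshift c), B)"
    using assms(1) unfolding x wf_block_def by auto
  ultimately show ?thesis
    using assms(3) unfolding x by (auto split: if_splits)
qed

lemma block_pts_split_block:
  "(\<Union>y\<in>set (split_block n c x). block_pts n y) = block_pts n x \<inter> outside_strip c"
proof -
  obtain a B where x: "x = (a, B)" by fastforce
  have "P \<in> (\<Union>y\<in>set (split_block n c x). block_pts n y)"
    if P: "P \<in> block_pts n (a, B)" "pleq (pshift c) P" for P
  proof -
    have m: "pleq (pmax a (pshift c)) P" using P by (auto simp: block_pts_def pleq_pmax_iff)
    have "lev (pmax a (pshift c)) \<le> n" using P lev_mono[OF m] by (simp add: block_pts_def)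
    moreover have "eleq (Fin (pmax a (pshift c))) B"
      using P m eleq_trans[of "Fin (pmax a (pshift c))" "Fin P" B] by (simp add: block_pts_def)
    ultimately show ?thesis using P m by (auto simp: x block_pts_def)
  qed
  moreover have "P \<in> (\<Union>y\<in>set (split_block n c x). block_pts n y)"
    if P: "P \<in> block_pts n (a, B)" "pleq P c" for P
  proof -
    have "pleq a c" using P pleq_trans[of a P c] by (simp add: block_pts_def)
    then show ?thesis using P by (auto simp: x block_pts_def eleq_Fin_emin_iff)
  qed
  moreover have "block_pts n y \<subseteq> block_pts n x \<inter> outside_strip c"
    if "y \<in> set (split_block n c x)" for y
    using that by (auto simp: x block_pts_def outside_strip_def eleq_Fin_emin_iff pleq_pmax_iff
        split: if_splits)
  ultimately show ?thesis
    unfolding x outside_strip_def by blast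
qed

lemma sorted_split_block: "sorted_wrt block_before (split_block n c x)"
proof -
  obtain a B where x: "x = (a, B)" by fastforce
  obtain b where b: "emin B c = Fin b" "pleq b c" by (rule emin_FinE)
  then have "block_before (a, emin B c) (pmax a (pshift c), B)"
    by (cases b) (auto simp: block_before_def pleq_def pmax_def pshift_def)
  then show ?thesis by (simp add: x)
qed

lemma split_block_bounds:
  "y \<in> set (split_block n c x) \<Longrightarrow> pleq (fst x) (fst y) \<and> eleq (snd y) (snd x)"
  by (cases x) (auto simp: emin_le pleq_def pmax_def split: if_splits)

lemma split_block_before:
  assumes "block_before x y" "p \<in> set (split_block n c x)" "q \<in> set (split_block n c y)"
  shows "block_before p q"
proof -
  have "eleq (eshift (snd p)) (eshift (snd x))"
    using split_block_bounds[OF assms(2)] by (blast intro: eshift_mono)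
  moreover have "eleq (Fin (fst y)) (Fin (fst q))"
    using split_block_bounds[OF assms(3)] by simp
  ultimately show ?thesis
    using assms(1) unfolding block_before_def by (blast intro: eleq_trans)
qed

lemma sorted_refine: "sorted_wrt block_before xs \<Longrightarrow> sorted_wrt block_before (refine n c xs)"
proof (induction xs)
  case (Cons x xs)
  have "block_before p q"
    if p: "p \<in> set (split_block n c x)" and q: "q \<in> set (refine n c xs)" for p q
  proof -
    obtain y where y: "y \<in> set xs" "q \<in> set (split_block n c y)"
      using q by (auto simp: refine_def)
    then have "block_before x y" using Cons.prems by simp
    then show ?thesis using split_block_before p y(2) by blast
  qed
  then show ?case
    using Cons sorted_split_block by (auto simp: refine_def sorted_wrt_append)
qed (simp add: refine_def)

lemma blocks_pts_refine: "blocks_pts n (refine n c xs) = blocks_pts n xs \<inter> outside_strip c"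
proof -
  have "blocks_pts n (refine n c xs) = (\<Union>x\<in>set xs. \<Union>y\<in>set (split_block n c x). block_pts n y)"
    by (auto simp: blocks_pts_def refine_def)
  then show ?thesis
    by (auto simp: blocks_pts_def block_pts_split_block)
qed

lemma ensemble_list_refine:
  assumes xs: "ensemble_list n xs" and c: "lev c < n"
  shows "ensemble_list n (refine n c xs)"
proof -
  obtain B0 rest where xs_eq: "xs = ((0, 0), B0) # rest"
    using xs by (cases xs) (auto simp: ensemble_list_def)
  have "pleq (0, 0) c" by (simp add: pleq_def)
  then have "hd (refine n c xs) = ((0, 0), emin B0 c)" "refine n c xs \<noteq> []"
    by (simp_all add: refine_def xs_eq)
  moreover have "\<forall>y\<in>set (refine n c xs). wf_block n y"
  proof
    fix y assume "y \<in> set (refine n c xs)"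
    then obtain x where "x \<in> set xs" "y \<in> set (split_block n c x)"
      by (auto simp: refine_def)
    then show "wf_block n y"
      using xs c wf_split_block unfolding ensemble_list_def by blast
  qed
  ultimately show ?thesis
    using xs sorted_refine by (simp add: ensemble_list_def)
qed

lemma ensemble_list_outside_strips:
  assumes "finite K" "\<forall>c\<in>K. lev c < n"
  shows "\<exists>xs. ensemble_list n xs \<and> blocks_pts n xs = {P. lev P \<le> n} \<inter> \<Inter> (outside_strip ` K)"
  using assms
proof (induction K rule: finite_induct)
  case empty
  have "ensemble_list n [((0, 0), Infty)]"
    by (auto simp: ensemble_list_def wf_block_def lev_def)
  moreover have "blocks_pts n [((0, 0), Infty)] = {P. lev P \<le> n}"
    by (auto simp: blocks_pts_def block_pts_def pleq_def)
  ultimately show ?case by auto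
next
  case (insert c K)
  then obtain xs where xs: "ensemble_list n xs"
      "blocks_pts n xs = {P. lev P \<le> n} \<inter> \<Inter> (outside_strip ` K)"
    by auto
  have "ensemble_list n (refine n c xs)"
    using xs(1) insert.prems by (simp add: ensemble_list_refine)
  moreover have "blocks_pts n (refine n c xs) = {P. lev P \<le> n} \<inter> \<Inter> (outside_strip ` insert c K)"
    unfolding blocks_pts_refine xs(2) by blast
  ultimately show ?case by blast
qed

subsection \<open>Hooks\<close>

fun hook :: "nat \<Rightarrow> block \<Rightarrow> (nat \<times> nat) set" where
  "hook n ((a0, b0), Fin (a1, b1)) =
     {(a0, y) | y. b0 \<le> y \<and> y \<le> b1} \<union> {(x, b1) | x. a0 \<le> x \<and> x \<le> a1}"
| "hook n ((a0, b0), Infty) = {(a0, y) | y. b0 \<le> y \<and> a0 + y \<le> n}"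

lemma block_cases:
  obtains a0 b0 a1 b1 where "x = ((a0, b0), Fin (a1, b1))" | a0 b0 where "x = ((a0, b0), Infty)"
  by (metis ept.exhaust prod.exhaust)

lemma hook_subset_block_pts: "wf_block n x \<Longrightarrow> hook n x \<subseteq> block_pts n x"
  by (cases x rule: block_cases) (auto simp: wf_block_def block_pts_def pleq_def lev_def)

lemma hook_comparable: "P \<in> hook n x \<Longrightarrow> Q \<in> hook n x \<Longrightarrow> pleq P Q \<or> pleq Q P"
  by (cases x rule: block_cases) (auto simp: pleq_def)

lemma hook_meets_level:
  assumes "P \<in> block_pts n x"
  shows "\<exists>Q\<in>hook n x. lev Q = lev P"
proof -
  obtain p q where P: "P = (p, q)" by fastforce
  show ?thesis
  proof (cases x rule: block_cases)
    case (1 a0 b0 a1 b1)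
    then have h: "a0 \<le> p" "b0 \<le> q" "p \<le> a1" "q \<le> b1"
      using assms P by (auto simp: block_pts_def pleq_def)
    show ?thesis
    proof (cases "p + q \<le> a0 + b1")
      case True
      then show ?thesis using h 1 P by (intro bexI[of _ "(a0, p + q - a0)"]) (auto simp: lev_def)
    next
      case False
      then show ?thesis using h 1 P by (intro bexI[of _ "(p + q - b1, b1)"]) (auto simp: lev_def)
    qed
  next
    case (2 a0 b0)
    then have "a0 \<le> p" "b0 \<le> q" "p + q \<le> n"
      using assms P by (auto simp: block_pts_def pleq_def lev_def)
    then show ?thesis using 2 P by (intro bexI[of _ "(a0, p + q - a0)"]) (auto simp: lev_def)
  qed
qed

lemma vv_rectangle: "a0 \<le> a \<Longrightarrow> b \<le> b1 \<Longrightarrow> a + b1 \<le> n \<Longrightarrow>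
   vv n a b = vv n a0 b + vv n a b1 - vv n a0 b1"
  by (rule ext) (simp add: vv_eq)

lemma vv_triangle: "a0 \<le> a \<Longrightarrow> a + b \<le> n \<Longrightarrow>
   vv n a b = vv n a0 b + vv n a0 (n - a) - vv n a0 (n - a0)"
  by (rule ext) (simp add: vv_eq)

lemma span_image_add_diff:
  "X \<in> K \<Longrightarrow> Y \<in> K \<Longrightarrow> Z \<in> K \<Longrightarrow> f X + f Y - f Z \<in> V.span (f ` K)"
  by (simp add: V.span_add V.span_base V.span_diff)

lemma vpt_in_span_hook:
  assumes "wf_block n x" "P \<in> block_pts n x"
  shows "vpt n P \<in> V.span (vpt n ` hook n x)"
proof -
  obtain p q where P: "P = (p, q)" by fastforce
  show ?thesis
  proof (cases x rule: block_cases)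
    case (1 a0 b0 a1 b1)
    then have h: "a0 \<le> p" "b0 \<le> q" "p \<le> a1" "q \<le> b1" "a1 + b1 < n"
      using assms P by (auto simp: block_pts_def pleq_def wf_block_def lev_def)
    have "vpt n P = vpt n (a0, q) + vpt n (p, b1) - vpt n (a0, b1)"
      using vv_rectangle[of a0 p q b1 n] h P by (simp add: vpt_def)
    moreover have "(a0, q) \<in> hook n x" "(p, b1) \<in> hook n x" "(a0, b1) \<in> hook n x"
      using h 1 by auto
    ultimately show ?thesis by (metis span_image_add_diff)
  next
    case (2 a0 b0)
    then have h: "a0 \<le> p" "b0 \<le> q" "p + q \<le> n"
      using assms P by (auto simp: block_pts_def pleq_def lev_def)
    have "vpt n P = vpt n (a0, q) + vpt n (a0, n - p) - vpt n (a0, n - a0)"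
      using vv_triangle[of a0 p q n] h P by (simp add: vpt_def)
    moreover have "(a0, q) \<in> hook n x" "(a0, n - p) \<in> hook n x" "(a0, n - a0) \<in> hook n x"
      using h 2 by auto
    ultimately show ?thesis by (metis span_image_add_diff)
  qed
qed

definition hooks :: "nat \<Rightarrow> block list \<Rightarrow> (nat \<times> nat) set" where
  "hooks n xs = (\<Union>x\<in>set xs. hook n x) - {(0, 0)}"

lemma hooks_subset:
  "ensemble_list n xs \<Longrightarrow> hooks n xs \<subseteq> blocks_pts n xs - {(0, 0)}"
  using hook_subset_block_pts by (fastforce simp: hooks_def blocks_pts_def ensemble_list_def)

lemma hooks_comparable:
  assumes xs: "ensemble_list n xs" and "P \<in> hooks n xs" "Q \<in> hooks n xs"
  shows "pleq P Q \<or> pleq Q P"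
proof -
  have "\<exists>i<length xs. R \<in> hook n (xs ! i)" if "R \<in> hooks n xs" for R
    using that unfolding hooks_def by (metis DiffD1 UN_E in_set_conv_nth)
  then obtain i j where i: "i < length xs" "P \<in> hook n (xs ! i)"
    and j: "j < length xs" "Q \<in> hook n (xs ! j)"
    using assms(2,3) by blast
  have pts: "P \<in> block_pts n (xs ! i)" "Q \<in> block_pts n (xs ! j)"
    using xs i j nth_mem hook_subset_block_pts unfolding ensemble_list_def by blast+
  consider "i < j" | "i = j" | "j < i" by linarith
  then show ?thesis
  proof cases
    case 1
    then have "block_before (xs ! i) (xs ! j)"
      using xs j(1) by (simp add: ensemble_list_def sorted_wrt_iff_nth_less)
    then show ?thesis using pts block_before_pleq by blast
  next
    case 2
    then show ?thesis using i(2) j(2) hook_comparable by blast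
  next
    case 3
    have "block_before (xs ! j) (xs ! i)"
      using xs 3 i(1) by (simp add: ensemble_list_def sorted_wrt_iff_nth_less)
    then show ?thesis using pts block_before_pleq by blast
  qed
qed

lemma lev_hooks:
  assumes "ensemble_list n xs"
  shows "lev ` hooks n xs = lev ` (blocks_pts n xs - {(0, 0)})"
proof
  show "lev ` hooks n xs \<subseteq> lev ` (blocks_pts n xs - {(0, 0)})"
    using hooks_subset[OF assms] by auto
next
  show "lev ` (blocks_pts n xs - {(0, 0)}) \<subseteq> lev ` hooks n xs"
  proof
    fix l assume "l \<in> lev ` (blocks_pts n xs - {(0, 0)})"
    then obtain P x where P: "P \<noteq> (0, 0)" "l = lev P" "x \<in> set xs" "P \<in> block_pts n x"
      unfolding blocks_pts_def by blast
    obtain Q where Q: "Q \<in> hook n x" "lev Q = lev P"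
      using hook_meets_level[OF P(4)] by blast
    have "Q \<noteq> (0, 0)" using P(1) Q(2) by (cases P) (auto simp: lev_def)
    then have "Q \<in> hooks n xs"
      using P(3) Q(1) unfolding hooks_def by blast
    then show "l \<in> lev ` hooks n xs"
      using P(2) Q(2) by (metis image_eqI)
  qed
qed

lemma span_hooks:
  assumes "ensemble_list n xs"
  shows "V.span (vpt n ` hooks n xs) = V.span (vpt n ` (blocks_pts n xs - {(0, 0)}))"
proof
  show "V.span (vpt n ` hooks n xs) \<subseteq> V.span (vpt n ` (blocks_pts n xs - {(0, 0)}))"
    using hooks_subset[OF assms] by (intro V.span_mono) auto
next
  have "vpt n P \<in> V.span (vpt n ` hooks n xs)" if P: "P \<in> blocks_pts n xs" for P
  proof -
    obtain x where x: "x \<in> set xs" "P \<in> block_pts n x"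
      using P unfolding blocks_pts_def by blast
    have "vpt n ` hook n x \<subseteq> insert 0 (vpt n ` hooks n xs)"
    proof
      fix v assume "v \<in> vpt n ` hook n x"
      then obtain Q where "Q \<in> hook n x" "v = vpt n Q" by blast
      then show "v \<in> insert 0 (vpt n ` hooks n xs)"
        using x(1) unfolding hooks_def by (cases "Q = (0, 0)") auto
    qed
    moreover have "vpt n P \<in> V.span (vpt n ` hook n x)"
      using assms x by (intro vpt_in_span_hook) (auto simp: ensemble_list_def)
    ultimately have "vpt n P \<in> V.span (insert 0 (vpt n ` hooks n xs))"
      using V.span_mono by blast
    then show ?thesis by simp
  qed
  then show "V.span (vpt n ` (blocks_pts n xs - {(0, 0)})) \<subseteq> V.span (vpt n ` hooks n xs)"
    by (intro V.span_minimal V.subspace_span) auto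
qed

subsection \<open>Independence of chains\<close>

lemma chain_has_greatest:
  assumes "finite C" "C \<noteq> {}" "\<forall>P\<in>C. \<forall>Q\<in>C. pleq P Q \<or> pleq Q P"
  obtains Q where "Q \<in> C" "\<forall>P\<in>C. pleq P Q"
proof -
  have "Max (lev ` C) \<in> lev ` C"
    using assms(1,2) by (intro Max_in) auto
  then obtain Q where Q: "Q \<in> C" "lev Q = Max (lev ` C)"
    by force
  have "pleq P Q" if P: "P \<in> C" for P
  proof -
    have "lev P \<le> lev Q" using assms(1) Q(2) P by simp
    then show ?thesis
      using assms(3) Q(1) P pleq_lev_eq[of Q P] lev_mono[of Q P] by fastforce
  qed
  then show ?thesis using Q(1) that by blast
qed

text \<open>Coordinate \<open>a\<close> (if \<open>p < a\<close>) or \<open>n - b + 1\<close> (if \<open>q < b\<close>) separates \<open>v(a,b)\<close> from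
  everything below \<open>(p, q)\<close>.\<close>

lemma vpt_new_coordinate:
  assumes "pleq P Q" "P \<noteq> Q" "lev Q \<le> n"
  obtains i where "vpt n Q i \<noteq> 0" "\<forall>R. pleq R P \<longrightarrow> vpt n R i = 0"
proof -
  obtain p q where P: "P = (p, q)" by fastforce
  obtain a b where Q: "Q = (a, b)" by fastforce
  have h: "p \<le> a" "q \<le> b" "a + b \<le> n" "p < a \<or> q < b"
    using assms P Q by (auto simp: pleq_def lev_def)
  show ?thesis
  proof (cases "p < a")
    case True
    have "vpt n R a = 0" if "pleq R P" for R
      using that h True P by (cases R) (auto simp: vpt_def vv_eq pleq_def)
    moreover have "vpt n Q a \<noteq> 0" using h True Q by (simp add: vpt_def vv_eq)
    ultimately show ?thesis using that by blast
  next
    case False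
    then have "q < b" using h by simp
    have "vpt n R (n - b + 1) = 0" if "pleq R P" for R
      using that h \<open>q < b\<close> P by (cases R) (auto simp: vpt_def vv_eq pleq_def)
    moreover have "vpt n Q (n - b + 1) \<noteq> 0" using h \<open>q < b\<close> Q by (simp add: vpt_def vv_eq)
    ultimately show ?thesis using that by blast
  qed
qed

lemma span_coordinate_zero: "\<forall>x\<in>X. x i = 0 \<Longrightarrow> y \<in> V.span X \<Longrightarrow> y i = (0::real)"
  using V.span_minimal[of X "{x. x i = 0}"]
  by (auto simp: V.subspace_def scalevec_def)

lemma vpt_notin_span_below:
  assumes "finite C" "\<forall>P\<in>C. \<forall>R\<in>C. pleq P R \<or> pleq R P" "\<forall>P\<in>C. pleq P Q \<and> P \<noteq> Q"
    and "Q \<noteq> (0, 0)" "lev Q \<le> n"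
  shows "vpt n Q \<notin> V.span (vpt n ` C)"
proof -
  have "\<forall>P\<in>insert (0, 0) C. \<forall>R\<in>insert (0, 0) C. pleq P R \<or> pleq R P"
    using assms(2) by (auto simp: pleq_def)
  then obtain Ps where Ps: "Ps \<in> insert (0, 0) C" "\<forall>P\<in>insert (0, 0) C. pleq P Ps"
    using chain_has_greatest[of "insert (0, 0) C"] assms(1) by blast
  have "pleq Ps Q" "Ps \<noteq> Q" using Ps(1) assms(3,4) by (auto simp: pleq_def)
  then obtain i where i: "vpt n Q i \<noteq> 0" "\<forall>R. pleq R Ps \<longrightarrow> vpt n R i = 0"
    using vpt_new_coordinate assms(5) by blast
  have "\<forall>v\<in>vpt n ` C. v i = 0"
    using i(2) Ps(2) by blast
  then show ?thesis
    using i(1) span_coordinate_zero by blast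
qed

lemma chain_independent:
  assumes "finite C" "C \<subseteq> Estar n" "\<forall>P\<in>C. \<forall>Q\<in>C. pleq P Q \<or> pleq Q P"
  shows "V.independent (vpt n ` C) \<and> inj_on (vpt n) C"
  using assms
proof (induction C rule: finite_ranking_induct[where f = lev])
  case empty
  show ?case by (simp add: V.independent_empty)
next
  case (insert Q C)
  show ?case
  proof (cases "Q \<in> C")
    case True
    then show ?thesis using insert by (simp add: insert_absorb)
  next
    case notin: False
    have below: "pleq P Q \<and> P \<noteq> Q" if P: "P \<in> C" for P
    proof -
      have "pleq P Q \<or> pleq Q P" "lev P \<le> lev Q"
        using insert.prems(2) insert.hyps(2) P by auto
      then show ?thesis
        using P notin pleq_lev_eq[of Q P] lev_mono[of Q P] by auto
    qed
    have new: "vpt n Q \<notin> V.span (vpt n ` C)"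
      using insert.hyps(1) insert.prems below
      by (intro vpt_notin_span_below) (auto simp: Estar_def E_def)
    have IH: "V.independent (vpt n ` C) \<and> inj_on (vpt n) C"
      by (rule insert.IH) (use insert.prems in auto)
    have "V.independent (insert (vpt n Q) (vpt n ` C))"
      using V.independent_insertI[OF new] IH by blast
    moreover have "vpt n Q \<notin> vpt n ` C"
      using new V.span_base by blast
    ultimately show ?thesis
      using IH notin by simp
  qed
qed

lemma dim_span_ensemble_list:
  assumes xs: "ensemble_list n xs"
  shows "V.dim (V.span (vpt n ` (blocks_pts n xs - {(0, 0)})))
       = card (lev ` (blocks_pts n xs - {(0, 0)}))"
proof -
  have sub: "hooks n xs \<subseteq> Estar n"
    using hooks_subset[OF xs] by (auto simp: Estar_def E_def blocks_pts_def block_pts_def)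
  then have fin: "finite (hooks n xs)"
    using finite_subset[OF _ E_finite] by (auto simp: Estar_def)
  have chain: "\<forall>P\<in>hooks n xs. \<forall>Q\<in>hooks n xs. pleq P Q \<or> pleq Q P"
    using hooks_comparable[OF xs] by blast
  have "inj_on lev (hooks n xs)"
    using chain pleq_lev_eq by (metis inj_onI)
  moreover have "V.independent (vpt n ` hooks n xs)" "inj_on (vpt n) (hooks n xs)"
    using chain_independent[OF fin sub chain] by auto
  ultimately show ?thesis
    using V.dim_span_eq_card_independent span_hooks[OF xs] lev_hooks[OF xs]
    by (metis card_image)
qed

subsection \<open>Decomposition into sign vectors\<close>

lemma downward_closed_initial_segment:
  fixes P :: "nat \<Rightarrow> bool"
  assumes "\<And>i j. 1 \<le> i \<Longrightarrow> i \<le> j \<Longrightarrow> j \<le> n \<Longrightarrow> P j \<Longrightarrow> P i"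
  obtains a where "a \<le> n" "\<And>i. 1 \<le> i \<Longrightarrow> i \<le> n \<Longrightarrow> P i \<longleftrightarrow> i \<le> a"
proof -
  define a where "a = Max (insert 0 {i. 1 \<le> i \<and> i \<le> n \<and> P i})"
  have fin: "finite {i. 1 \<le> i \<and> i \<le> n \<and> P i}" by simp
  have "a \<in> insert 0 {i. 1 \<le> i \<and> i \<le> n \<and> P i}"
    unfolding a_def using fin by (intro Max_in) auto
  moreover have "i \<le> a" if "1 \<le> i" "i \<le> n" "P i" for i
    unfolding a_def using fin that by (intro Max_ge) auto
  ultimately have a: "a = 0 \<or> 1 \<le> a \<and> a \<le> n \<and> P a" "\<And>i. 1 \<le> i \<Longrightarrow> i \<le> n \<Longrightarrow> P i \<Longrightarrow> i \<le> a"
    by auto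
  show ?thesis
  proof (rule that)
    show "a \<le> n" using a(1) by auto
    show "P i \<longleftrightarrow> i \<le> a" if "1 \<le> i" "i \<le> n" for i
      using a assms[of i a] that by auto
  qed
qed

lemma chamber_nonzero_index:
  assumes "x \<in> chamber n" "x i \<noteq> 0"
  shows "1 \<le> i \<and> i \<le> n"
proof -
  have "\<not> (i < 1 \<or> n < i)" using assms unfolding chamber_def by blast
  then show ?thesis by linarith
qed

lemma sgn_chamber_eq_vv:
  assumes x: "x \<in> chamber n"
  obtains a b where "a + b \<le> n" "(\<lambda>i. sgn (x i)) = vv n a b"
proof -
  have anti: "x j \<le> x i" if "1 \<le> i" "i \<le> j" "j \<le> n" for i j
    using x that unfolding chamber_def by blast
  have "0 < x i" if "1 \<le> i" "i \<le> j" "j \<le> n" "0 < x j" for i j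
    using anti[OF that(1-3)] that(4) by linarith
  then obtain a where a: "a \<le> n" "\<And>i. 1 \<le> i \<Longrightarrow> i \<le> n \<Longrightarrow> 0 < x i \<longleftrightarrow> i \<le> a"
    using downward_closed_initial_segment[of n "\<lambda>i. 0 < x i"] by blast
  have "0 \<le> x i" if "1 \<le> i" "i \<le> j" "j \<le> n" "0 \<le> x j" for i j
    using anti[OF that(1-3)] that(4) by linarith
  then obtain a' where a': "a' \<le> n" "\<And>i. 1 \<le> i \<Longrightarrow> i \<le> n \<Longrightarrow> 0 \<le> x i \<longleftrightarrow> i \<le> a'"
    using downward_closed_initial_segment[of n "\<lambda>i. 0 \<le> x i"] by blast
  have "a \<le> a'"
  proof (cases "a = 0")
    case False
    then have "0 < x a" using a by simp
    then show ?thesis using a'(2)[of a] a(1) False by simp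
  qed simp
  have "sgn (x i) = vv n a (n - a') i" for i
  proof (cases "1 \<le> i \<and> i \<le> n")
    case True
    then show ?thesis
      using a(2)[of i] a'(2)[of i] a'(1) \<open>a \<le> a'\<close> by (auto simp: vv_eq sgn_if)
  next
    case False
    then have "x i = 0" using chamber_nonzero_index[OF x, of i] by blast
    then show ?thesis using False a'(1) \<open>a \<le> a'\<close> by (auto simp: vv_eq)
  qed
  then show ?thesis
    using that[of a "n - a'"] a'(1) \<open>a \<le> a'\<close> by auto
qed

lemma sgn_in_chamber:
  assumes "x \<in> chamber n"
  shows "(\<lambda>i. sgn (x i)) \<in> chamber n"
proof -
  have "sgn b \<le> sgn a" if "b \<le> a" for a b :: real
    using that by (auto simp: sgn_if)
  then show ?thesis
    using assms unfolding chamber_def by auto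
qed

lemma sgn_in_hyp: "x \<in> hyp i j \<Longrightarrow> (\<lambda>i. sgn (x i)) \<in> hyp i j"
  by (cases "i = j") (auto simp: hyp_def sgn_if)

definition shrink :: "real \<Rightarrow> (nat \<Rightarrow> real) \<Rightarrow> (nat \<Rightarrow> real)" where
  "shrink t x = (\<lambda>i. x i - t * sgn (x i))"

lemma shrink_mono:
  fixes x y t :: real
  assumes "y \<le> x" "0 < t" "x \<noteq> 0 \<Longrightarrow> t \<le> \<bar>x\<bar>" "y \<noteq> 0 \<Longrightarrow> t \<le> \<bar>y\<bar>"
  shows "y - t * sgn y \<le> x - t * sgn x"
  using assms by (auto simp: sgn_if abs_if split: if_splits)

lemma shrink_in_chamber:
  assumes "x \<in> chamber n" "0 < t" "\<forall>i. x i \<noteq> 0 \<longrightarrow> t \<le> \<bar>x i\<bar>"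
  shows "shrink t x \<in> chamber n"
  using assms unfolding chamber_def shrink_def by (auto intro!: shrink_mono)

lemma shrink_in_hyp:
  assumes "x \<in> hyp i j"
  shows "shrink t x \<in> hyp i j"
proof (cases "i = j")
  case True
  then show ?thesis using assms by (simp add: hyp_def shrink_def)
next
  case False
  then have "x j = - x i" using assms by (simp add: hyp_def eq_neg_iff_add_eq_0 add.commute)
  then show ?thesis using False by (simp add: hyp_def shrink_def sgn_minus)
qed

lemma card_support_shrink:
  assumes "finite {i. x i \<noteq> 0}" "x k \<noteq> 0"
  shows "card {i. shrink \<bar>x k\<bar> x i \<noteq> 0} < card {i. x i \<noteq> 0}"
proof -
  have "shrink \<bar>x k\<bar> x k = 0" by (simp add: shrink_def abs_mult_sgn)
  then have "{i. shrink \<bar>x k\<bar> x i \<noteq> 0} \<subseteq> {i. x i \<noteq> 0} - {k}" by (auto simp: shrink_def)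
  then have "card {i. shrink \<bar>x k\<bar> x i \<noteq> 0} \<le> card ({i. x i \<noteq> 0} - {k})"
    using assms(1) by (intro card_mono) auto
  also have "\<dots> < card {i. x i \<noteq> 0}" using card_Diff1_less[OF assms(1)] assms(2) by simp
  finally show ?thesis .
qed

lemma sgn_in_vertices:
  assumes L: "L = chamber n \<inter> (\<Inter>(i, j)\<in>T. hyp i j)" and "x \<in> L" "x k \<noteq> 0"
  obtains P where "P \<in> vertices n L" "vpt n P = (\<lambda>i. sgn (x i))"
proof -
  have x: "x \<in> chamber n" "\<forall>(i, j)\<in>T. x \<in> hyp i j" using assms(2) L by auto
  obtain a b where ab: "a + b \<le> n" "(\<lambda>i. sgn (x i)) = vv n a b"
    using sgn_chamber_eq_vv[OF x(1)] by blast
  then have sgn_eq: "vpt n (a, b) = (\<lambda>i. sgn (x i))" by (simp add: vpt_def)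
  have "(a, b) \<noteq> (0, 0)"
  proof
    assume "(a, b) = (0, 0)"
    then have "sgn (x k) = 0" using fun_cong[OF sgn_eq, of k] by simp
    then show False using assms(3) by (simp add: sgn_if split: if_splits)
  qed
  moreover have "(\<lambda>i. sgn (x i)) \<in> L"
    using sgn_in_chamber[OF x(1)] x(2) sgn_in_hyp L by blast
  ultimately have "(a, b) \<in> vertices n L"
    using ab(1) by (simp add: vertices_def Estar_def E_def lev_def sgn_eq)
  then show ?thesis using that sgn_eq by blast
qed

lemma flat_subset_span_vertices:
  assumes L: "L = chamber n \<inter> (\<Inter>(i, j)\<in>T. hyp i j)"
  shows "x \<in> L \<Longrightarrow> x \<in> V.span (vpt n ` vertices n L)"
proof (induction "card {i. x i \<noteq> 0}" arbitrary: x rule: less_induct)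
  case less
  have x: "x \<in> chamber n" "\<forall>(i, j)\<in>T. x \<in> hyp i j" using less.prems L by auto
  let ?S = "{i. x i \<noteq> 0}"
  have "?S \<subseteq> {1..n}" using chamber_nonzero_index[OF x(1)] by auto
  then have fin: "finite ?S" using finite_subset by blast
  show ?case
  proof (cases "?S = {}")
    case True
    then have "x = 0" by (auto simp: fun_eq_iff)
    then show ?thesis by (simp add: V.span_zero)
  next
    case False
    define t where "t = Min ((\<lambda>i. \<bar>x i\<bar>) ` ?S)"
    have "t \<in> (\<lambda>i. \<bar>x i\<bar>) ` ?S" unfolding t_def using fin False by (intro Min_in) auto
    then obtain k where k: "x k \<noteq> 0" "\<bar>x k\<bar> = t" by blast
    have t: "0 < t" "\<forall>i. x i \<noteq> 0 \<longrightarrow> t \<le> \<bar>x i\<bar>"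
      using k fin by (auto simp: t_def)
    have "shrink t x \<in> chamber n" using x(1) t by (rule shrink_in_chamber)
    moreover have "\<forall>(i, j)\<in>T. shrink t x \<in> hyp i j" using x(2) shrink_in_hyp by blast
    ultimately have "shrink t x \<in> L" using L by blast
    moreover have "card {i. shrink t x i \<noteq> 0} < card ?S"
      using card_support_shrink[OF fin k(1)] by (simp add: k(2))
    ultimately have shrunk: "shrink t x \<in> V.span (vpt n ` vertices n L)"
      using less.hyps by blast
    obtain P where P: "P \<in> vertices n L" "vpt n P = (\<lambda>i. sgn (x i))"
      using sgn_in_vertices[OF L less.prems k(1)] by blast
    then have "scalevec t (vpt n P) \<in> V.span (vpt n ` vertices n L)"
      by (intro V.span_scale V.span_base imageI)
    moreover have "x = shrink t x + scalevec t (vpt n P)"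
      by (simp add: P(2) shrink_def scalevec_def fun_eq_iff)
    ultimately show ?thesis
      using shrunk V.span_add by metis
  qed
qed

lemma span_flat_eq_span_vertices:
  assumes "L = chamber n \<inter> (\<Inter>(i, j)\<in>T. hyp i j)"
  shows "V.span L = V.span (vpt n ` vertices n L)"
proof
  show "V.span L \<subseteq> V.span (vpt n ` vertices n L)"
    using flat_subset_span_vertices[OF assms] by (intro V.span_minimal V.subspace_span) auto
  show "V.span (vpt n ` vertices n L) \<subseteq> V.span L"
    by (intro V.span_mono) (auto simp: vertices_def)
qed

theorem lemma5p1:
  fixes n k :: nat and L :: "(nat \<Rightarrow> real) set"
  assumes "is_k_flat n k L"
  shows "is_k_ensemble n k {(a, b) \<in> Estar n. vv n a b \<in> L}"
proof -
  obtain T where T: "T \<subseteq> {(i, j). 1 \<le> i \<and> i \<le> j \<and> j \<le> n}"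
    and L: "L = chamber n \<inter> (\<Inter>(i, j)\<in>T. hyp i j)" and k: "span_dim L = k"
    using assms by (auto simp: is_k_flat_def is_flat_def)
  define K where "K = (\<lambda>(i, j). (i - 1, n - j)) ` T"
  have "T \<subseteq> {..n} \<times> {..n}" using T by auto
  then have "finite T" by (rule finite_subset) simp
  moreover have "\<forall>c\<in>K. lev c < n" using T by (auto simp: K_def lev_def)
  ultimately obtain xs where xs: "ensemble_list n xs"
      "blocks_pts n xs = {P. lev P \<le> n} \<inter> \<Inter> (outside_strip ` K)"
    using ensemble_list_outside_strips[of K n] by (auto simp: K_def)
  have vertices: "vertices n L = blocks_pts n xs - {(0, 0)}"
    unfolding L flat_vertices_eq_outside_strips[OF T] xs(2) K_def
    by (auto simp: Estar_def E_def)
  have "span_dim L = V.dim (V.span (vpt n ` vertices n L))"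
    by (simp add: span_dim_def span_flat_eq_span_vertices[OF L])
  also have "\<dots> = card (lev ` vertices n L)"
    unfolding vertices by (rule dim_span_ensemble_list[OF xs(1)])
  moreover have "{(a, b) \<in> Estar n. vv n a b \<in> L} = vertices n L"
    by (auto simp: vertices_def vpt_def)
  ultimately show ?thesis
    using ensemble_list_is_ensemble[OF xs(1)] k vertices by (simp add: is_k_ensemble_def)
qed

end
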